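(* Let $q$ be a prime power, $k\ge 3$ and $n\ge \frac{k(k+1)}{2}+k-3$ with $n\le q$. Then for every vector $\boldsymbol\alpha=(\alpha_1,\dots,\alpha_n)$ of pairwise distinct elements of $\mathbb F_q$, the Reed–Solomon code $\mathrm{RS}_{\boldsymbol\alpha}(n,k)$ has insdel distance at most $2n-4k+4$.
   Context: $\mathrm{RS}_{\boldsymbol\alpha}(n,k)=\{(f(\alpha_1),\dots,f(\alpha_n)): f\in\mathbb F_q[x],\ \deg f<k\}$. For $\mathbf u,\mathbf v\in\mathbb F_q^n$, the insdel distance $d_I(\mathbf u,\mathbf v)$ is the minimum number of insertions and deletions transforming $\mathbf u$ into $\mathbf v$; equivalently $d_I(\mathbf u,\mathbf v)=2n-2\ell_{\rm LCS}(\mathbf u,\mathbf v)$ where $\ell_{\rm LCS}$ is the length of a longest common subsequence. The insdel distance of a code is the minimum insdel distance between distinct codewords. *)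

theory Defs
  imports "HOL-Computational_Algebra.Polynomial" "HOL-Library.Sublist"
begin

definition lcs_len :: "'a list \<Rightarrow> 'a list \<Rightarrow> nat" where
  "lcs_len u v = Max {length w | w. subseq w u \<and> subseq w v}"

definition insdel_dist :: "'a list \<Rightarrow> 'a list \<Rightarrow> nat" where
  "insdel_dist u v = 2 * length u - 2 * lcs_len u v"

definition code_insdel_dist :: "'a list set \<Rightarrow> nat" where
  "code_insdel_dist C = Min {insdel_dist u v | u v. u \<in> C \<and> v \<in> C \<and> u \<noteq> v}"

definition RS_code :: "'a::field list \<Rightarrow> nat \<Rightarrow> 'a list set" where
  "RS_code alpha k = {map (poly f) alpha | f. degree f < k}"

end

theory Submission
  imports Defs
begin

text \<open>Pigeonhole: the \<open>q^(2k)\<close> pairs \<open>(f, g)\<close> of polynomials of degree \<open>< k\<close> are mapped to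
  only \<open>q^(2k - 1)\<close> value vectors of the linear forms \<open>f(\<alpha>_t) - g(\<alpha>_(t+1))\<close> (\<open>t < 2k - 2\<close>) and
  \<open>g(\<alpha>_(2k-2))\<close>. The difference of a colliding pair is a nonzero pair with \<open>f(\<alpha>_t) = g(\<alpha>_(t+1))\<close>
  for \<open>t < 2k - 2\<close>: the first \<open>2k - 2\<close> symbols of the codeword of \<open>f\<close> reappear, shifted by one
  position, in the codeword of \<open>g\<close>, so the two codewords have an LCS of length \<open>2k - 2\<close>.
  They differ because of \<open>g(\<alpha>_(2k-2)) = 0\<close>: if \<open>f = g\<close>, the shift propagates this zero back to
  all of \<open>\<alpha>_0, \<dots>, \<alpha>_(2k-2)\<close>, forcing \<open>f = 0\<close>.\<close>

lemma lcs_len_finite: "finite {length w | w. subseq w u \<and> subseq w v}"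
  by (rule finite_subset[of _ "{..length u}"]) (auto dest: list_emb_length)

lemma lcs_len_ge:
  assumes "subseq w u" "subseq w v"
  shows "length w \<le> lcs_len u v"
  unfolding lcs_len_def using assms by (intro Max_ge[OF lcs_len_finite]) auto

lemma lcs_len_ge_shift:
  assumes "\<And>t. t < m \<Longrightarrow> u ! t = v ! Suc t" "m \<le> length u" "m < length v"
  shows "m \<le> lcs_len u v"
proof -
  have "take m u = take m (drop 1 v)"
    using assms by (intro nth_equalityI) auto
  moreover have "subseq (take m (drop 1 v)) v"
    using prefix_imp_subseq[OF take_is_prefix] suffix_imp_subseq[OF suffix_drop]
    by (rule subseq_order.order_trans)
  ultimately have "length (take m u) \<le> lcs_len u v"
    by (intro lcs_len_ge) (metis take_is_prefix prefix_imp_subseq)+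
  with assms(2) show ?thesis by simp
qed

lemma code_insdel_dist_le:
  assumes "u \<in> C" "v \<in> C" "u \<noteq> v" "\<forall>x\<in>C. length x \<le> n"
  shows "code_insdel_dist C \<le> insdel_dist u v"
proof -
  have "finite {insdel_dist u v | u v. u \<in> C \<and> v \<in> C \<and> u \<noteq> v}"
    by (rule finite_subset[of _ "{..2*n}"]) (use assms in \<open>auto simp: insdel_dist_def\<close>)
  then show ?thesis
    unfolding code_insdel_dist_def using assms by (intro Min_le) auto
qed

lemma card_degree_less:
  assumes "k > 0"
  shows "card {p :: 'a::{finite,zero} poly. degree p < k} = card (UNIV :: 'a set) ^ k"
proof -
  have "bij_betw Poly {cs :: 'a list. length cs = k} {p. degree p < k}"
  proof (rule bij_betw_byWitness[where f' = "\<lambda>p. map (coeff p) [0..<k]"])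
    show "\<forall>cs\<in>{cs. length cs = k}. map (coeff (Poly cs)) [0..<k] = cs"
      by (auto intro: nth_equalityI simp: nth_default_nth)
    show "\<forall>p\<in>{p. degree p < k}. Poly (map (coeff p) [0..<k]) = p"
      by (auto intro!: poly_eqI simp: nth_default_def coeff_eq_0)
    show "Poly ` {cs. length cs = k} \<subseteq> {p. degree p < k}"
      using assms by (auto intro!: degree_lessI simp: nth_default_def)
    show "(\<lambda>p. map (coeff p) [0..<k]) ` {p. degree p < k} \<subseteq> {cs. length cs = k}"
      by auto
  qed
  then show ?thesis
    using card_lists_length_eq[of "UNIV :: 'a set" k] by (simp add: bij_betw_same_card)
qed

lemma exists_shifted_evaluation_pair:
  fixes x :: "nat \<Rightarrow> 'a::{finite,field}"
  assumes "k > 0"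
  obtains f g :: "'a poly"
  where "degree f < k" "degree g < k" "f \<noteq> 0 \<or> g \<noteq> 0"
    "\<And>t. t < 2*k-2 \<Longrightarrow> poly f (x t) = poly g (x (Suc t))"
    "poly g (x (2*k-2)) = 0"
proof -
  define P where "P = {p :: 'a poly. degree p < k}"
  define L where "L = {xs :: 'a list. set xs \<subseteq> UNIV \<and> length xs = 2*k-1}"
  define \<Phi> where "\<Phi> = (\<lambda>(f, g). map (\<lambda>t. if t < 2*k-2 then poly f (x t) - poly g (x (Suc t))
                                        else poly g (x t)) [0..<2*k-1])"
  have "card (UNIV :: 'a set) \<ge> 2"
    using card_mono[of UNIV "{0::'a, 1}"] by simp
  then have "card L < card (P \<times> P)"
    using assms card_lists_length_eq[of "UNIV :: 'a set" "2*k-1"]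
    by (simp add: L_def P_def card_cartesian_product
        card_degree_less power_add[symmetric] power_strict_increasing)
  moreover have "\<Phi> ` (P \<times> P) \<subseteq> L" "finite L"
    using finite_lists_length_eq[of "UNIV :: 'a set" "2*k-1"] by (auto simp: \<Phi>_def L_def)
  ultimately have "\<not> inj_on \<Phi> (P \<times> P)"
    using card_inj_on_le by (metis not_le)
  then obtain f1 g1 f2 g2 where
    in_P: "f1 \<in> P" "g1 \<in> P" "f2 \<in> P" "g2 \<in> P" and
    ne: "(f1, g1) \<noteq> (f2, g2)" and same: "\<Phi> (f1, g1) = \<Phi> (f2, g2)"
    unfolding inj_on_def by auto
  have same_at: "\<Phi> (f1, g1) ! t = \<Phi> (f2, g2) ! t" for t
    using same by simp
  show thesis
  proof
    show "degree (f1 - f2) < k" "degree (g1 - g2) < k"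
      using in_P by (auto simp: P_def intro: degree_diff_less)
    show "f1 - f2 \<noteq> 0 \<or> g1 - g2 \<noteq> 0"
      using ne by auto
    show "poly (f1 - f2) (x t) = poly (g1 - g2) (x (Suc t))" if "t < 2*k-2" for t
      using same_at[of t] that by (simp add: \<Phi>_def algebra_simps)
    show "poly (g1 - g2) (x (2*k-2)) = 0"
      using same_at[of "2*k-2"] assms by (simp add: \<Phi>_def)
  qed
qed

lemma shifted_evaluation_pair_ne:
  fixes f g :: "'a::field poly"
  assumes "inj_on x {..2*k-2}" "degree f < k" "f \<noteq> 0 \<or> g \<noteq> 0"
    and shift: "\<And>t. t < 2*k-2 \<Longrightarrow> poly f (x t) = poly g (x (Suc t))"
    and last: "poly g (x (2*k-2)) = 0"
  shows "f \<noteq> g"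
proof
  assume "f = g"
  have root: "poly f (x t) = 0" if "t \<le> 2*k-2" for t
    using that
  proof (induction rule: inc_induct)
    case base
    then show ?case using last \<open>f = g\<close> by simp
  next
    case (step t)
    then show ?case using shift[of t] \<open>f = g\<close> by simp
  qed
  have "card (x ` {..2*k-2}) > degree f"
    using assms(1,2) by (simp add: card_image)
  then have "f = 0"
    using root by (intro poly_eqI_degree[of "x ` {..2*k-2}"]) auto
  with assms(3) \<open>f = g\<close> show False by simp
qed

lemma RS_code_insdel_dist_le:
  fixes alpha :: "'a::{finite,field} list"
  assumes "k > 0" "2*k-1 \<le> length alpha" "distinct alpha"
  shows "code_insdel_dist (RS_code alpha k) \<le> 2 * length alpha - 2 * (2*k-2)"
proof -
  obtain f g where deg: "degree f < k" "degree g < k" and nonzero: "f \<noteq> 0 \<or> g \<noteq> 0"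
    and shift: "\<And>t. t < 2*k-2 \<Longrightarrow> poly f (alpha ! t) = poly g (alpha ! Suc t)"
    and last: "poly g (alpha ! (2*k-2)) = 0"
    using exists_shifted_evaluation_pair[OF assms(1), of "nth alpha"] by blast
  have "inj_on (nth alpha) {..2*k-2}"
    using assms by (auto simp: inj_on_def nth_eq_iff_index_eq)
  then have "f \<noteq> g"
    using deg(1) nonzero shift last by (rule shifted_evaluation_pair_ne)
  define u v where "u = map (poly f) alpha" and "v = map (poly g) alpha"
  have lcs: "2*k-2 \<le> lcs_len u v"
    using shift assms(1,2) by (intro lcs_len_ge_shift) (auto simp: u_def v_def)
  have "u \<noteq> v"
  proof
    assume "u = v"
    moreover have "card (set alpha) > degree f" "card (set alpha) > degree g"
      using deg assms by (simp_all add: distinct_card)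
    ultimately have "f = g"
      by (intro poly_eqI_degree[of "set alpha"]) (auto simp: u_def v_def)
    with \<open>f \<noteq> g\<close> show False ..
  qed
  moreover have "u \<in> RS_code alpha k" "v \<in> RS_code alpha k"
    using deg by (auto simp: RS_code_def u_def v_def)
  moreover have "\<forall>w\<in>RS_code alpha k. length w \<le> length alpha"
    by (auto simp: RS_code_def)
  ultimately have "code_insdel_dist (RS_code alpha k) \<le> insdel_dist u v"
    by (intro code_insdel_dist_le)
  also have "\<dots> = 2 * length alpha - 2 * lcs_len u v"
    by (simp add: insdel_dist_def u_def)
  also have "\<dots> \<le> 2 * length alpha - 2 * (2*k-2)"
    using lcs by simp
  finally show ?thesis .
qed

theorem theorem3p9:
  fixes alpha :: "'a::{finite,field} list"
    and n k :: nat
  assumes "\<exists>p m. prime p \<and> m > 0 \<and> card (UNIV :: 'a set) = (p::nat) ^ m"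
    and "k \<ge> 3"
    and "k * (k + 1) div 2 + k - 3 \<le> n"
    and "n \<le> card (UNIV :: 'a set)"
    and "length alpha = n"
    and "distinct alpha"
  shows "int (code_insdel_dist (RS_code alpha k)) \<le> 2 * int n - 4 * int k + 4"
proof -
  have "3 * k \<le> k * k"
    using \<open>k \<ge> 3\<close> by simp
  moreover have "k * (k + 1) = k * k + k"
    by simp
  ultimately have "k + 2 \<le> k * (k + 1) div 2"
    using \<open>k \<ge> 3\<close> by linarith
  then have "2*k-1 \<le> n"
    using assms(3) by linarith
  then have "code_insdel_dist (RS_code alpha k) \<le> 2 * n - 2 * (2*k-2)"
    using RS_code_insdel_dist_le[of k alpha] assms(2,5,6) by simp
  then show ?thesis
    using \<open>2*k-1 \<le> n\<close> \<open>k \<ge> 3\<close> by linarith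
qed

end
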